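(* Let $\Gamma$ and $\Delta$ be finite subsets of ${\sf Frm}$. Then $\vdash_{\sf WF_{N_2}}\bigwedge\Gamma\rightarrow\bigvee\Delta$ if and only if $\vdash_{\sf M_{Nec}}(\bigwedge\Gamma\rightarrow\bigvee\Delta)^\square$, i.e. $\vdash_{\sf M_{Nec}}\square(\bigwedge\Gamma^\square\supset\bigvee\Delta^\square)$.
   Context: Language: countably many atoms $p,q,\dots$, the constant $\bot$, and binary connectives $\wedge,\vee,\rightarrow$ ($\rightarrow$ is strict implication). ${\sf Frm}$ is the set of formulas built from atoms and $\bot$ with $\wedge,\vee,\rightarrow$; $A,B,C,D$ range over ${\sf Frm}$; $\supset$ denotes material implication. The Hilbert system ${\sf WF_{N_2}}$ over ${\sf Frm}$ has axiom schemes $A\rightarrow(A\vee B)$; $B\rightarrow(A\vee B)$; $(A\wedge B)\rightarrow A$; $(A\wedge B)\rightarrow B$; $A\wedge(B\vee C)\rightarrow(A\wedge B)\vee(A\wedge C)$; $A\rightarrow A$; $\bot\rightarrow A$; and rules (from theorems to a theorem): from $A$ and $A\rightarrow B$ infer $B$; from $A$ infer $B\rightarrow A$; from $A\rightarrow B$ and $B\rightarrow C$ infer $A\rightarrow C$; from $A\rightarrow B$ and $A\rightarrow C$ infer $A\rightarrow(B\wedge C)$; from $A\rightarrow C$ and $B\rightarrow C$ infer $(A\vee B)\rightarrow C$; from $A$ and $B$ infer $A\wedge B$; (${\sf N_2}$) from $C\rightarrow A\vee D$ and $C\wedge B\rightarrow D$ infer $(A\rightarrow B)\rightarrow(C\rightarrow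 D)$. $\vdash_{\sf WF_{N_2}}A$ means $A$ is a theorem of this system. $\bigwedge\Gamma$ and $\bigvee\Delta$ denote the conjunction and disjunction of the members (empty conjunction read as $\top:=\bot\rightarrow\bot$, empty disjunction as $\bot$). The modal language $\mathcal{L}_\square$ has atoms, $\bot$, binary $\wedge,\vee,\supset$ and unary $\square$. ${\sf M_{Nec}}$ is the smallest set of $\mathcal{L}_\square$-formulas containing all classical propositional tautologies and $\square(\bot\supset\bot)$, and closed under modus ponens, uniform substitution, and the rule RM: from $A\supset B$ infer $\square A\supset\square B$ (equivalently, the monotonic classical modal logic ${\sf M}$ extended by the necessitation rule). The $\square$-translation is: $p^\square=p$, $\bot^\square=\bot$, $(A\circ B)^\square=A^\square\circ B^\square$ for $\circ\in\{\wedge,\vee,\supset\}$, $(A\rightarrow B)^\square=\square(A^\square\supset B^\square)$; $\Gamma^\square=\{A^\square:A\in\Gamma\}$. *)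

theory Defs
  imports Main
begin

datatype frm = Atom nat | Bot | And frm frm | Or frm frm | Imp frm frm

definition Top :: frm where "Top = Imp Bot Bot"

fun conj :: "frm list \<Rightarrow> frm" where
  "conj [] = Top"
| "conj [A] = A"
| "conj (A # As) = And A (conj As)"

fun disj :: "frm list \<Rightarrow> frm" where
  "disj [] = Bot"
| "disj [A] = A"
| "disj (A # As) = Or A (disj As)"

inductive WF_N2 :: "frm \<Rightarrow> bool" where
  ax_or1: "WF_N2 (Imp A (Or A B))"
| ax_or2: "WF_N2 (Imp B (Or A B))"
| ax_and1: "WF_N2 (Imp (And A B) A)"
| ax_and2: "WF_N2 (Imp (And A B) B)"
| ax_dist: "WF_N2 (Imp (And A (Or B C)) (Or (And A B) (And A C)))"
| ax_id: "WF_N2 (Imp A A)"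
| ax_bot: "WF_N2 (Imp Bot A)"
| r_mp: "WF_N2 A \<Longrightarrow> WF_N2 (Imp A B) \<Longrightarrow> WF_N2 B"
| r_weak: "WF_N2 A \<Longrightarrow> WF_N2 (Imp B A)"
| r_trans: "WF_N2 (Imp A B) \<Longrightarrow> WF_N2 (Imp B C) \<Longrightarrow> WF_N2 (Imp A C)"
| r_andI: "WF_N2 (Imp A B) \<Longrightarrow> WF_N2 (Imp A C) \<Longrightarrow> WF_N2 (Imp A (And B C))"
| r_orE: "WF_N2 (Imp A C) \<Longrightarrow> WF_N2 (Imp B C) \<Longrightarrow> WF_N2 (Imp (Or A B) C)"
| r_adj: "WF_N2 A \<Longrightarrow> WF_N2 B \<Longrightarrow> WF_N2 (And A B)"
| r_N2: "WF_N2 (Imp C (Or A D)) \<Longrightarrow> WF_N2 (Imp (And C B) D) \<Longrightarrow>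
         WF_N2 (Imp (Imp A B) (Imp C D))"

datatype mfrm = MAtom nat | MBot | MAnd mfrm mfrm | MOr mfrm mfrm | MImp mfrm mfrm
  | Box mfrm

text \<open>Classical evaluation: v values atoms, w values boxed formulas
  (boxed formulas are treated as propositional atoms).\<close>
fun meval :: "(nat \<Rightarrow> bool) \<Rightarrow> (mfrm \<Rightarrow> bool) \<Rightarrow> mfrm \<Rightarrow> bool" where
  "meval v w (MAtom n) = v n"
| "meval v w MBot = False"
| "meval v w (MAnd A B) = (meval v w A \<and> meval v w B)"
| "meval v w (MOr A B) = (meval v w A \<or> meval v w B)"
| "meval v w (MImp A B) = (meval v w A \<longrightarrow> meval v w B)"
| "meval v w (Box A) = w (Box A)"

definition tautology :: "mfrm \<Rightarrow> bool" where
  "tautology A = (\<forall>v w. meval v w A)"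

fun msubst :: "(nat \<Rightarrow> mfrm) \<Rightarrow> mfrm \<Rightarrow> mfrm" where
  "msubst s (MAtom n) = s n"
| "msubst s MBot = MBot"
| "msubst s (MAnd A B) = MAnd (msubst s A) (msubst s B)"
| "msubst s (MOr A B) = MOr (msubst s A) (msubst s B)"
| "msubst s (MImp A B) = MImp (msubst s A) (msubst s B)"
| "msubst s (Box A) = Box (msubst s A)"

inductive M_Nec :: "mfrm \<Rightarrow> bool" where
  taut: "tautology A \<Longrightarrow> M_Nec A"
| nec_top: "M_Nec (Box (MImp MBot MBot))"
| mp: "M_Nec A \<Longrightarrow> M_Nec (MImp A B) \<Longrightarrow> M_Nec B"
| us: "M_Nec A \<Longrightarrow> M_Nec (msubst s A)"
| RM: "M_Nec (MImp A B) \<Longrightarrow> M_Nec (MImp (Box A) (Box B))"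

fun btr :: "frm \<Rightarrow> mfrm" where
  "btr (Atom n) = MAtom n"
| "btr Bot = MBot"
| "btr (And A B) = MAnd (btr A) (btr B)"
| "btr (Or A B) = MOr (btr A) (btr B)"
| "btr (Imp A B) = Box (MImp (btr A) (btr B))"

end

theory Submission
  imports Defs
begin

text \<open>Soundness: every rule of WF_N2 becomes a tautology, modus ponens or RM under the
  box translation, once one knows that M_Nec is closed under necessitation and under
  removing an outer box; the latter holds because reading each boxed formula Box C as
  "C is a theorem" makes every substitution instance of a theorem classically true.
  Completeness: the prime theories of WF_N2 form a monotone neighbourhood model in which
  a set of worlds is a neighbourhood of x iff it is everything or it includes the truth set
  of some A \<rightarrow> B \<in> x; rule N2 is exactly what makes the truth lemma go through for
  strict implications.\<close>

lemma M_Nec_mp_taut: "M_Nec A \<Longrightarrow> tautology (MImp A B) \<Longrightarrow> M_Nec B"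
  using M_Nec.mp M_Nec.taut by blast

lemma M_Nec_mp2_taut:
  "M_Nec A \<Longrightarrow> M_Nec B \<Longrightarrow> tautology (MImp A (MImp B C)) \<Longrightarrow> M_Nec C"
  using M_Nec.mp M_Nec.taut by blast

lemma M_Nec_necessitation: "M_Nec A \<Longrightarrow> M_Nec (Box A)"
proof -
  assume "M_Nec A"
  then have "M_Nec (MImp (MImp MBot MBot) A)"
    by (rule M_Nec_mp_taut) (simp add: tautology_def)
  then have "M_Nec (MImp (Box (MImp MBot MBot)) (Box A))" by (rule M_Nec.RM)
  then show ?thesis using M_Nec.nec_top M_Nec.mp by blast
qed

lemma meval_msubst:
  "meval v w (msubst s A) =
   meval (\<lambda>n. meval v w (s n)) (\<lambda>B. case B of Box C \<Rightarrow> w (Box (msubst s C)) | _ \<Rightarrow> False) A"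
  by (induction A) auto

lemma tautology_msubst: "tautology A \<Longrightarrow> tautology (msubst s A)"
  unfolding tautology_def using meval_msubst by metis

lemma msubst_msubst: "msubst s (msubst t A) = msubst (\<lambda>n. msubst s (t n)) A"
  by (induction A) auto

lemma msubst_MAtom: "msubst MAtom A = A"
  by (induction A) auto

definition provable_box :: "mfrm \<Rightarrow> bool" where
  "provable_box B = (case B of Box C \<Rightarrow> M_Nec C | _ \<Rightarrow> False)"

text \<open>Closing the statement under substitutions makes the induction go through the rule us.\<close>

lemma M_Nec_true_under_provable_box:
  "M_Nec A \<Longrightarrow> \<forall>s v. meval v provable_box (msubst s A)"
proof (induction rule: M_Nec.induct)
  case (taut A)
  then show ?case using tautology_msubst tautology_def by blast
next
  case nec_top
  have "M_Nec (MImp MBot MBot)" by (rule M_Nec.taut) (simp add: tautology_def)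
  then show ?case by (simp add: provable_box_def)
next
  case (mp A B)
  then show ?case by simp
next
  case (us A s)
  then show ?case by (simp add: msubst_msubst)
next
  case (RM A B)
  show ?case
  proof (intro allI)
    fix s v
    have "M_Nec (msubst s (MImp A B))" using RM.hyps M_Nec.us by blast
    then show "meval v provable_box (msubst s (MImp (Box A) (Box B)))"
      by (simp add: provable_box_def) (meson M_Nec.mp)
  qed
qed

lemma M_Nec_unbox: "M_Nec (Box C) \<Longrightarrow> M_Nec C"
  using M_Nec_true_under_provable_box[of "Box C"]
  by (simp add: provable_box_def) (metis msubst_MAtom)

lemma M_Nec_box_mp2_taut:
  "M_Nec (Box A) \<Longrightarrow> M_Nec (Box B) \<Longrightarrow> tautology (MImp A (MImp B C)) \<Longrightarrow> M_Nec (Box C)"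
  by (rule M_Nec_necessitation, rule M_Nec_mp2_taut[OF M_Nec_unbox M_Nec_unbox])

lemma M_Nec_btr_if_WF_N2: "WF_N2 F \<Longrightarrow> M_Nec (btr F)"
proof (induction rule: WF_N2.induct)
  case (r_mp A B)
  have "M_Nec (MImp (btr A) (btr B))" using r_mp.IH(2) M_Nec_unbox by simp
  then show ?case using r_mp.IH(1) M_Nec.mp by blast
next
  case (r_weak A B)
  have "M_Nec (MImp (btr B) (btr A))"
    by (rule M_Nec_mp_taut[OF r_weak.IH]) (simp add: tautology_def)
  then show ?case by (simp add: M_Nec_necessitation)
next
  case (r_trans A B C)
  show ?case
    using M_Nec_box_mp2_taut[OF r_trans.IH[simplified]] by (simp add: tautology_def)
next
  case (r_andI A B C)
  show ?case
    using M_Nec_box_mp2_taut[OF r_andI.IH[simplified]] by (simp add: tautology_def)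
next
  case (r_orE A C B)
  show ?case
    using M_Nec_box_mp2_taut[OF r_orE.IH[simplified]] by (simp add: tautology_def)
next
  case (r_adj A B)
  show ?case
    using M_Nec_mp2_taut[OF r_adj.IH] by (simp add: tautology_def)
next
  case (r_N2 C A D B)
  have "M_Nec (MImp (btr C) (MOr (btr A) (btr D)))"
    and "M_Nec (MImp (MAnd (btr C) (btr B)) (btr D))"
    using r_N2.IH M_Nec_unbox by simp_all
  then have "M_Nec (MImp (MImp (btr A) (btr B)) (MImp (btr C) (btr D)))"
    by (rule M_Nec_mp2_taut) (auto simp add: tautology_def)
  then show ?case by (simp add: M_Nec.RM M_Nec_necessitation)
qed (simp_all add: M_Nec_necessitation M_Nec.taut tautology_def)

section \<open>Monotone neighbourhood semantics\<close>

fun nsat :: "'w set \<Rightarrow> ('w \<Rightarrow> 'w set set) \<Rightarrow> (nat \<Rightarrow> 'w set) \<Rightarrow> 'w \<Rightarrow> mfrm \<Rightarrow> bool" where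
  "nsat W N V x (MAtom n) = (x \<in> V n)"
| "nsat W N V x MBot = False"
| "nsat W N V x (MAnd A B) = (nsat W N V x A \<and> nsat W N V x B)"
| "nsat W N V x (MOr A B) = (nsat W N V x A \<or> nsat W N V x B)"
| "nsat W N V x (MImp A B) = (nsat W N V x A \<longrightarrow> nsat W N V x B)"
| "nsat W N V x (Box A) = ({y\<in>W. nsat W N V y A} \<in> N x)"

lemma meval_nsat: "meval (\<lambda>n. nsat W N V x (MAtom n)) (nsat W N V x) A = nsat W N V x A"
  by (induction A) auto

lemma nsat_msubst: "nsat W N V x (msubst s A) = nsat W N (\<lambda>n. {y. nsat W N V y (s n)}) x A"
  by (induction A arbitrary: x) auto

lemma M_Nec_nsat_valid:
  assumes unit: "\<And>x. x \<in> W \<Longrightarrow> W \<in> N x"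
    and mono: "\<And>x S T. x \<in> W \<Longrightarrow> S \<in> N x \<Longrightarrow> S \<subseteq> T \<Longrightarrow> T \<subseteq> W \<Longrightarrow> T \<in> N x"
  shows "M_Nec A \<Longrightarrow> \<forall>V. \<forall>x\<in>W. nsat W N V x A"
proof (induction rule: M_Nec.induct)
  case (taut A)
  then show ?case unfolding tautology_def by (metis meval_nsat)
next
  case nec_top
  then show ?case using unit by simp
next
  case (mp A B)
  then show ?case by simp
next
  case (us A s)
  then show ?case by (simp add: nsat_msubst)
next
  case (RM A B)
  show ?case
  proof (intro allI ballI)
    fix V x assume "x \<in> W"
    moreover have "{y\<in>W. nsat W N V y A} \<subseteq> {y\<in>W. nsat W N V y B}" using RM.IH by auto
    ultimately show "nsat W N V x (MImp (Box A) (Box B))" using mono by auto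
  qed
qed

section \<open>Prime theories of WF_N2\<close>

definition closed_theory :: "frm set \<Rightarrow> bool" where
  "closed_theory x \<longleftrightarrow>
     (\<forall>A B. A \<in> x \<longrightarrow> WF_N2 (Imp A B) \<longrightarrow> B \<in> x) \<and> (\<forall>A B. A \<in> x \<longrightarrow> B \<in> x \<longrightarrow> And A B \<in> x)"

definition prime_theory :: "frm set \<Rightarrow> bool" where
  "prime_theory x \<longleftrightarrow>
     closed_theory x \<and> x \<noteq> {} \<and> Bot \<notin> x \<and> (\<forall>A B. Or A B \<in> x \<longrightarrow> A \<in> x \<or> B \<in> x)"

lemma WF_N2_And_mono_left1: "WF_N2 (Imp (And (And A B) C) (And A C))"
  by (rule WF_N2.r_andI[OF WF_N2.r_trans[OF WF_N2.ax_and1 WF_N2.ax_and1] WF_N2.ax_and2])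

lemma WF_N2_And_mono_left2: "WF_N2 (Imp (And (And A B) C) (And B C))"
  by (rule WF_N2.r_andI[OF WF_N2.r_trans[OF WF_N2.ax_and1 WF_N2.ax_and2] WF_N2.ax_and2])

lemma closed_theory_consequences: "closed_theory {C. WF_N2 (Imp A C)}"
  unfolding closed_theory_def by (auto intro: WF_N2.r_trans WF_N2.r_andI)

lemma closed_theory_Union_chain:
  assumes "\<And>X. X \<in> CC \<Longrightarrow> closed_theory X"
    and "\<And>X Y. X \<in> CC \<Longrightarrow> Y \<in> CC \<Longrightarrow> X \<subseteq> Y \<or> Y \<subseteq> X"
  shows "closed_theory (\<Union>CC)"
  unfolding closed_theory_def
proof (intro conjI allI impI)
  fix C D assume "C \<in> \<Union>CC" "WF_N2 (Imp C D)"
  then obtain X where "X \<in> CC" "C \<in> X" by blast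
  with \<open>WF_N2 (Imp C D)\<close> have "D \<in> X" using assms(1) unfolding closed_theory_def by blast
  with \<open>X \<in> CC\<close> show "D \<in> \<Union>CC" by blast
next
  fix C D assume "C \<in> \<Union>CC" "D \<in> \<Union>CC"
  then obtain X Y where XY: "X \<in> CC" "Y \<in> CC" "C \<in> X" "D \<in> Y" by blast
  have "C \<in> X \<and> D \<in> X \<or> C \<in> Y \<and> D \<in> Y" using assms(2)[OF XY(1,2)] XY(3,4) by blast
  then have "And C D \<in> X \<or> And C D \<in> Y"
    using assms(1)[OF XY(1)] assms(1)[OF XY(2)] unfolding closed_theory_def by blast
  with XY(1,2) show "And C D \<in> \<Union>CC" by blast
qed

lemma closed_theory_extend:
  assumes "closed_theory M"
  shows "closed_theory {E. \<exists>F\<in>M. WF_N2 (Imp (And F C) E)}"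
  unfolding closed_theory_def
proof (intro conjI allI impI)
  fix E D assume "E \<in> {E. \<exists>F\<in>M. WF_N2 (Imp (And F C) E)}" "WF_N2 (Imp E D)"
  then show "D \<in> {E. \<exists>F\<in>M. WF_N2 (Imp (And F C) E)}" using WF_N2.r_trans by blast
next
  fix E1 E2 assume "E1 \<in> {E. \<exists>F\<in>M. WF_N2 (Imp (And F C) E)}" "E2 \<in> {E. \<exists>F\<in>M. WF_N2 (Imp (And F C) E)}"
  then obtain F1 F2 where F: "F1 \<in> M" "F2 \<in> M"
      "WF_N2 (Imp (And F1 C) E1)" "WF_N2 (Imp (And F2 C) E2)"
    by blast
  have "And F1 F2 \<in> M" using assms F unfolding closed_theory_def by blast
  moreover have "WF_N2 (Imp (And (And F1 F2) C) (And E1 E2))"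
    using WF_N2.r_andI[OF WF_N2.r_trans[OF WF_N2_And_mono_left1 F(3)]
        WF_N2.r_trans[OF WF_N2_And_mono_left2 F(4)]] .
  ultimately show "And E1 E2 \<in> {E. \<exists>F\<in>M. WF_N2 (Imp (And F C) E)}" by blast
qed

lemma maximal_closed_theory_prime:
  assumes thM: "closed_theory M" and AM: "A \<in> M" and BM: "B \<notin> M"
    and max: "\<And>X. closed_theory X \<Longrightarrow> B \<notin> X \<Longrightarrow> M \<subseteq> X \<Longrightarrow> X = M"
  shows "prime_theory M"
proof -
  have cl: "\<And>C D. C \<in> M \<Longrightarrow> WF_N2 (Imp C D) \<Longrightarrow> D \<in> M"
    and cj: "\<And>C D. C \<in> M \<Longrightarrow> D \<in> M \<Longrightarrow> And C D \<in> M"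
    using thM unfolding closed_theory_def by auto
  have outside_refutes: "\<exists>F\<in>M. WF_N2 (Imp (And F C) B)" if "C \<notin> M" for C
  proof (rule ccontr)
    assume "\<not> ?thesis"
    moreover have "M \<subseteq> {E. \<exists>F\<in>M. WF_N2 (Imp (And F C) E)}" using WF_N2.ax_and1 by blast
    moreover have "C \<in> {E. \<exists>F\<in>M. WF_N2 (Imp (And F C) E)}" using AM WF_N2.ax_and2 by blast
    ultimately show False using max[OF closed_theory_extend[OF thM]] \<open>C \<notin> M\<close> by blast
  qed
  have "C \<in> M \<or> D \<in> M" if "Or C D \<in> M" for C D
  proof (rule ccontr)
    assume "\<not> ?thesis"
    then obtain F1 F2 where F: "F1 \<in> M" "F2 \<in> M"
        "WF_N2 (Imp (And F1 C) B)" "WF_N2 (Imp (And F2 D) B)"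
      using outside_refutes by blast
    let ?F = "And F1 F2"
    have "WF_N2 (Imp (Or (And ?F C) (And ?F D)) B)"
      using WF_N2.r_orE[OF WF_N2.r_trans[OF WF_N2_And_mono_left1 F(3)]
          WF_N2.r_trans[OF WF_N2_And_mono_left2 F(4)]] .
    then have "WF_N2 (Imp (And ?F (Or C D)) B)" using WF_N2.ax_dist WF_N2.r_trans by blast
    moreover have "And ?F (Or C D) \<in> M" using cj F that by blast
    ultimately show False using cl BM by blast
  qed
  moreover have "Bot \<notin> M" using cl BM WF_N2.ax_bot by blast
  ultimately show ?thesis unfolding prime_theory_def using thM AM by blast
qed

lemma lindenbaum:
  assumes "\<not> WF_N2 (Imp A B)"
  shows "\<exists>x. prime_theory x \<and> A \<in> x \<and> B \<notin> x"
proof -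
  define FF where "FF = {x. closed_theory x \<and> A \<in> x \<and> B \<notin> x}"
  have "\<exists>M\<in>FF. \<forall>X\<in>FF. M \<subseteq> X \<longrightarrow> X = M"
  proof (rule subset_Zorn_nonempty)
    show "FF \<noteq> {}"
      using closed_theory_consequences[of A] assms WF_N2.ax_id unfolding FF_def by blast
  next
    fix CC assume "CC \<noteq> {}" and "subset.chain FF CC"
    then have "CC \<subseteq> FF" "\<And>X Y. X \<in> CC \<Longrightarrow> Y \<in> CC \<Longrightarrow> X \<subseteq> Y \<or> Y \<subseteq> X"
      unfolding subset.chain_def by auto
    with \<open>CC \<noteq> {}\<close> show "\<Union>CC \<in> FF"
      using closed_theory_Union_chain[of CC] unfolding FF_def by blast
  qed
  then obtain M where "M \<in> FF" and "\<And>X. X \<in> FF \<Longrightarrow> M \<subseteq> X \<Longrightarrow> X = M" by blast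
  then have "prime_theory M" "A \<in> M" "B \<notin> M"
    using maximal_closed_theory_prime[of M A B] unfolding FF_def by blast+
  then show ?thesis by blast
qed

lemma WF_N2_Imp_if_prime_theories:
  "(\<And>x. prime_theory x \<Longrightarrow> A \<in> x \<Longrightarrow> B \<in> x) \<Longrightarrow> WF_N2 (Imp A B)"
  using lindenbaum by blast

lemma prime_theory_closed: "prime_theory x \<Longrightarrow> A \<in> x \<Longrightarrow> WF_N2 (Imp A B) \<Longrightarrow> B \<in> x"
  unfolding prime_theory_def closed_theory_def by blast

lemma prime_theory_And: "prime_theory x \<Longrightarrow> And A B \<in> x \<longleftrightarrow> A \<in> x \<and> B \<in> x"
  unfolding prime_theory_def closed_theory_def using WF_N2.ax_and1 WF_N2.ax_and2 by blast

lemma prime_theory_Or: "prime_theory x \<Longrightarrow> Or A B \<in> x \<longleftrightarrow> A \<in> x \<or> B \<in> x"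
  unfolding prime_theory_def closed_theory_def using WF_N2.ax_or1 WF_N2.ax_or2 by blast

lemma prime_theory_WF_N2: "prime_theory x \<Longrightarrow> WF_N2 A \<Longrightarrow> A \<in> x"
  unfolding prime_theory_def closed_theory_def using WF_N2.r_weak by blast

section \<open>The canonical neighbourhood model\<close>

definition canon_worlds :: "frm set set" where
  "canon_worlds = {x. prime_theory x}"

definition canon_nbhd :: "frm set \<Rightarrow> frm set set set" where
  "canon_nbhd x = {T. T \<subseteq> canon_worlds \<and> (T = canon_worlds \<or>
     (\<exists>A B. Imp A B \<in> x \<and> {y\<in>canon_worlds. A \<in> y \<longrightarrow> B \<in> y} \<subseteq> T))}"

definition canon_val :: "nat \<Rightarrow> frm set set" where
  "canon_val n = {x. Atom n \<in> x}"

lemma canon_nbhd_unit: "canon_worlds \<in> canon_nbhd x"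
  unfolding canon_nbhd_def by blast

lemma canon_nbhd_mono:
  "S \<in> canon_nbhd x \<Longrightarrow> S \<subseteq> T \<Longrightarrow> T \<subseteq> canon_worlds \<Longrightarrow> T \<in> canon_nbhd x"
  unfolding canon_nbhd_def by blast

lemma canon_nbhd_Imp:
  assumes x: "prime_theory x"
  shows "{y\<in>canon_worlds. A \<in> y \<longrightarrow> B \<in> y} \<in> canon_nbhd x \<longleftrightarrow> Imp A B \<in> x"
proof
  let ?S = "{y\<in>canon_worlds. A \<in> y \<longrightarrow> B \<in> y}"
  assume "?S \<in> canon_nbhd x"
  then consider "?S = canon_worlds"
    | A' B' where "Imp A' B' \<in> x" "{y\<in>canon_worlds. A' \<in> y \<longrightarrow> B' \<in> y} \<subseteq> ?S"
    unfolding canon_nbhd_def by blast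
  then show "Imp A B \<in> x"
  proof cases
    case 1
    then have "WF_N2 (Imp A B)"
      by (intro WF_N2_Imp_if_prime_theories) (auto simp: canon_worlds_def)
    then show ?thesis using prime_theory_WF_N2[OF x] by blast
  next
    case (2 A' B')
    then have S: "\<And>y. prime_theory y \<Longrightarrow> A' \<in> y \<longrightarrow> B' \<in> y \<Longrightarrow> A \<in> y \<Longrightarrow> B \<in> y"
      unfolding canon_worlds_def by blast
    have "WF_N2 (Imp A (Or A' B))"
      by (rule WF_N2_Imp_if_prime_theories) (metis S prime_theory_Or)
    moreover have "WF_N2 (Imp (And A B') B)"
      by (rule WF_N2_Imp_if_prime_theories) (metis S prime_theory_And)
    ultimately have "WF_N2 (Imp (Imp A' B') (Imp A B))" by (rule WF_N2.r_N2)
    then show ?thesis using prime_theory_closed[OF x \<open>Imp A' B' \<in> x\<close>] by blast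
  qed
qed (auto simp: canon_nbhd_def)

lemma canon_truth:
  "prime_theory x \<Longrightarrow> nsat canon_worlds canon_nbhd canon_val x (btr F) \<longleftrightarrow> F \<in> x"
proof (induction F arbitrary: x)
  case Bot
  then show ?case by (simp add: prime_theory_def)
next
  case (Imp A B)
  have "{y\<in>canon_worlds. nsat canon_worlds canon_nbhd canon_val y (MImp (btr A) (btr B))} =
        {y\<in>canon_worlds. A \<in> y \<longrightarrow> B \<in> y}"
    using Imp.IH by (auto simp: canon_worlds_def)
  then show ?case using canon_nbhd_Imp[OF Imp.prems] by simp
qed (simp_all add: canon_val_def prime_theory_And prime_theory_Or)

lemma WF_N2_if_M_Nec_btr:
  assumes "M_Nec (btr F)"
  shows "WF_N2 F"
proof -
  have "\<forall>V. \<forall>x\<in>canon_worlds. nsat canon_worlds canon_nbhd V x (btr F)"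
    by (rule M_Nec_nsat_valid[OF canon_nbhd_unit canon_nbhd_mono assms])
  then have "\<And>x. prime_theory x \<Longrightarrow> F \<in> x"
    using canon_truth unfolding canon_worlds_def by blast
  then have "WF_N2 (Imp Top F)" by (rule WF_N2_Imp_if_prime_theories)
  with WF_N2.ax_id[of Bot] show ?thesis unfolding Top_def by (rule WF_N2.r_mp)
qed

theorem WF_N2_iff_M_Nec_btr: "WF_N2 F \<longleftrightarrow> M_Nec (btr F)"
  using M_Nec_btr_if_WF_N2 WF_N2_if_M_Nec_btr by blast

theorem theorem4p2:
  fixes \<Gamma> \<Delta> :: "frm list"
  shows "WF_N2 (Imp (conj \<Gamma>) (disj \<Delta>)) \<longleftrightarrow> M_Nec (btr (Imp (conj \<Gamma>) (disj \<Delta>)))"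
  by (rule WF_N2_iff_M_Nec_btr)

end
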